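(* A 5-ring is $4K_1$-free if and only if it is $2P_3$-free.
   Context: Graphs are finite and simple. $4K_1$ is the edgeless graph on four vertices; $2P_3$ is the disjoint union of two 3-vertex paths; $H$-free means no induced subgraph isomorphic to $H$. A 5-ring is a graph $R$ whose vertex set can be partitioned into nonempty sets $X_0,\dots,X_4$ (indices in $\mathbb{Z}_5$) such that for each $i$, $X_i$ can be ordered as $u^i_1,\dots,u^i_{|X_i|}$ so that $X_i\subseteq N_R[u^i_{|X_i|}]\subseteq\dots\subseteq N_R[u^i_1]=X_{i-1}\cup X_i\cup X_{i+1}$, where $N_R[v]$ denotes the closed neighbourhood of $v$. *)

theory Defs
  imports Main
begin

definition simple_graph :: "'a set \<Rightarrow> ('a \<Rightarrow> 'a \<Rightarrow> bool) \<Rightarrow> bool" where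
  "simple_graph V E \<longleftrightarrow> finite V \<and> (\<forall>x y. E x y \<longrightarrow> x \<in> V \<and> y \<in> V)
     \<and> (\<forall>x y. E x y \<longrightarrow> E y x) \<and> (\<forall>x. \<not> E x x)"

definition closed_nbhd :: "'a set \<Rightarrow> ('a \<Rightarrow> 'a \<Rightarrow> bool) \<Rightarrow> 'a \<Rightarrow> 'a set" where
  "closed_nbhd V E v = {w \<in> V. w = v \<or> E v w}"

definition has_induced :: "'b set \<Rightarrow> ('b \<Rightarrow> 'b \<Rightarrow> bool) \<Rightarrow> 'a set \<Rightarrow> ('a \<Rightarrow> 'a \<Rightarrow> bool) \<Rightarrow> bool" where
  "has_induced VH EH V E \<longleftrightarrow> (\<exists>f. inj_on f VH \<and> f ` VH \<subseteq> V \<and>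
      (\<forall>x\<in>VH. \<forall>y\<in>VH. EH x y \<longleftrightarrow> E (f x) (f y)))"

definition H_free :: "'b set \<Rightarrow> ('b \<Rightarrow> 'b \<Rightarrow> bool) \<Rightarrow> 'a set \<Rightarrow> ('a \<Rightarrow> 'a \<Rightarrow> bool) \<Rightarrow> bool" where
  "H_free VH EH V E \<longleftrightarrow> \<not> has_induced VH EH V E"

definition fourK1_V :: "nat set" where "fourK1_V = {0..<4}"
definition fourK1_E :: "nat \<Rightarrow> nat \<Rightarrow> bool" where "fourK1_E x y = False"

definition twoP3_V :: "nat set" where "twoP3_V = {0..<6}"
definition twoP3_E :: "nat \<Rightarrow> nat \<Rightarrow> bool" where
  "twoP3_E x y \<longleftrightarrow> {x, y} \<in> {{0,1},{1,2},{3,4},{4,5}}"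

definition five_ring :: "'a set \<Rightarrow> ('a \<Rightarrow> 'a \<Rightarrow> bool) \<Rightarrow> bool" where
  "five_ring V E \<longleftrightarrow> (\<exists>X :: nat \<Rightarrow> 'a set.
      (\<forall>i<5. X i \<noteq> {}) \<and> (\<Union>i<5. X i) = V \<and>
      (\<forall>i<5. \<forall>j<5. i \<noteq> j \<longrightarrow> X i \<inter> X j = {}) \<and>
      (\<forall>i<5. \<exists>us. distinct us \<and> set us = X i \<and>
          X i \<subseteq> closed_nbhd V E (last us) \<and>
          (\<forall>k. Suc k < length us \<longrightarrow> closed_nbhd V E (us ! Suc k) \<subseteq> closed_nbhd V E (us ! k)) \<and>
          closed_nbhd V E (us ! 0) = X ((i + 4) mod 5) \<union> X i \<union> X ((i + 1) mod 5)))"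

end

theory Submission
  imports Defs
begin

text \<open>The two ends of each path of an induced \<open>2P\<^sub>3\<close> form an induced \<open>4K\<^sub>1\<close>, in any
graph. Conversely, in a 5-ring every part is a clique, parts at distance two are anticomplete, and
the first vertex of each part is adjacent to all of the two neighbouring parts. Hence a stable set
of four vertices meets four distinct parts, after a rotation \<open>X\<^sub>1, \<dots>, X\<^sub>4\<close>, in \<open>a\<^sub>1, \<dots>, a\<^sub>4\<close>;
if \<open>b\<^sub>1\<close> and \<open>b\<^sub>4\<close> are the first vertices of \<open>X\<^sub>1\<close> and \<open>X\<^sub>4\<close>, the paths \<open>a\<^sub>1 b\<^sub>1 a\<^sub>2\<close> and
\<open>a\<^sub>3 b\<^sub>4 a\<^sub>4\<close> induce a \<open>2P\<^sub>3\<close>.\<close>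

lemma has_induced_trans:
  assumes "has_induced VK EK VH EH" and "has_induced VH EH V E"
  shows "has_induced VK EK V E"
proof -
  obtain f where f: "inj_on f VK" "f ` VK \<subseteq> VH" "\<forall>x\<in>VK. \<forall>y\<in>VK. EK x y \<longleftrightarrow> EH (f x) (f y)"
    using assms(1) unfolding has_induced_def by blast
  obtain g where g: "inj_on g VH" "g ` VH \<subseteq> V" "\<forall>x\<in>VH. \<forall>y\<in>VH. EH x y \<longleftrightarrow> E (g x) (g y)"
    using assms(2) unfolding has_induced_def by blast
  have "inj_on (g \<circ> f) VK"
    using f(1,2) g(1) by (blast intro: comp_inj_on inj_on_subset)
  moreover have "(g \<circ> f) ` VK \<subseteq> V"
    using f(2) g(2) by auto
  moreover have "\<forall>x\<in>VK. \<forall>y\<in>VK. EK x y \<longleftrightarrow> E ((g \<circ> f) x) ((g \<circ> f) y)"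
    using f(2,3) g(3) by (simp add: image_subset_iff)
  ultimately show ?thesis
    unfolding has_induced_def by blast
qed

lemma fourK1_induced_in_twoP3: "has_induced fourK1_V fourK1_E twoP3_V twoP3_E"
  unfolding has_induced_def
proof (intro exI conjI)
  let ?f = "\<lambda>k. [0, 2, 3, 5 :: nat] ! k"
  have V: "fourK1_V = {0, 1, 2, 3}"
    by (auto simp: fourK1_V_def)
  show "inj_on ?f fourK1_V" "?f ` fourK1_V \<subseteq> twoP3_V"
    "\<forall>x\<in>fourK1_V. \<forall>y\<in>fourK1_V. fourK1_E x y \<longleftrightarrow> twoP3_E (?f x) (?f y)"
    by (auto simp: V twoP3_V_def fourK1_E_def twoP3_E_def doubleton_eq_iff)
qed

lemma has_induced_fourK1E:
  assumes "has_induced fourK1_V fourK1_E V E"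
  obtains I where "I \<subseteq> V" "card I = 4" "\<forall>x\<in>I. \<forall>y\<in>I. \<not> E x y"
proof -
  obtain f where f: "inj_on f fourK1_V" "f ` fourK1_V \<subseteq> V"
    "\<forall>x\<in>fourK1_V. \<forall>y\<in>fourK1_V. fourK1_E x y \<longleftrightarrow> E (f x) (f y)"
    using assms unfolding has_induced_def by blast
  show ?thesis
    by (rule that[of "f ` fourK1_V"]) (use f in \<open>auto simp: card_image fourK1_V_def fourK1_E_def\<close>)
qed

lemma has_induced_twoP3I:
  assumes "simple_graph V E" and "distinct [a0, a1, a2, b0, b1, b2]"
    and "{a0, a1, a2, b0, b1, b2} \<subseteq> V"
    and "E a0 a1" "E a1 a2" "\<not> E a0 a2" "E b0 b1" "E b1 b2" "\<not> E b0 b2"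
    and "\<forall>a\<in>{a0, a1, a2}. \<forall>b\<in>{b0, b1, b2}. \<not> E a b"
  shows "has_induced twoP3_V twoP3_E V E"
  unfolding has_induced_def
proof (intro exI conjI)
  let ?vs = "[a0, a1, a2, b0, b1, b2]"
  have V: "twoP3_V = {0, 1, 2, 3, 4, 5}"
    by (auto simp: twoP3_V_def)
  have sym: "\<And>x y. E x y \<Longrightarrow> E y x" and irrefl: "\<And>x. \<not> E x x"
    using assms(1) unfolding simple_graph_def by blast+
  show "inj_on (nth ?vs) twoP3_V"
    using assms(2) by (rule inj_on_nth) (simp add: twoP3_V_def)
  show "nth ?vs ` twoP3_V \<subseteq> V"
    using assms(3) by (simp add: V)
  show "\<forall>x\<in>twoP3_V. \<forall>y\<in>twoP3_V. twoP3_E x y \<longleftrightarrow> E (?vs ! x) (?vs ! y)"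
    using assms(4-) by (auto simp: V twoP3_E_def doubleton_eq_iff irrefl dest: sym)
qed

lemma descending_chain_le:
  assumes "\<And>k. Suc k < n \<Longrightarrow> f (Suc k) \<le> f k" and "k \<le> j" and "j < n"
  shows "f j \<le> (f k :: 'b :: order)"
  using assms(2,3)
proof (induction j rule: dec_induct)
  case (step j)
  then show ?case
    using assms(1)[of j] by (auto intro: order.trans)
qed simp

lemma descending_list_bounds:
  assumes "\<And>k. Suc k < length us \<Longrightarrow> N (us ! Suc k) \<le> N (us ! k)" and "x \<in> set us"
  shows "N (last us) \<le> N x" and "N x \<le> (N (us ! 0) :: 'b :: order)"
proof -
  obtain k where k: "k < length us" "x = us ! k"
    using assms(2) by (auto simp: in_set_conv_nth)
  then show "N x \<le> N (us ! 0)"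
    using descending_chain_le[of _ "\<lambda>k. N (us ! k)"] assms(1) by blast
  have "last us = us ! (length us - 1)"
    using k(1) by (intro last_conv_nth) auto
  then show "N (last us) \<le> N x"
    using descending_chain_le[of "length us" "\<lambda>i. N (us ! i)" k "length us - 1"] assms(1) k
    by simp
qed

text \<open>The orderings in the definition of a 5-ring matter only through the resulting bounds
\<open>X\<^sub>i \<subseteq> N[x] \<subseteq> X\<^sub>i\<^sub>-\<^sub>1 \<union> X\<^sub>i \<union> X\<^sub>i\<^sub>+\<^sub>1\<close> for \<open>x \<in> X\<^sub>i\<close> and through the first vertex of each part.\<close>

locale five_ring_partition =
  fixes V :: "'a set" and E :: "'a \<Rightarrow> 'a \<Rightarrow> bool" and X :: "nat \<Rightarrow> 'a set"
  assumes simple: "simple_graph V E"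
    and parts_cover: "(\<Union>i<5. X i) = V"
    and parts_disjoint: "i < 5 \<Longrightarrow> j < 5 \<Longrightarrow> i \<noteq> j \<Longrightarrow> X i \<inter> X j = {}"
    and part_subset_nbhd: "i < 5 \<Longrightarrow> x \<in> X i \<Longrightarrow> X i \<subseteq> closed_nbhd V E x"
    and nbhd_subset_parts:
      "i < 5 \<Longrightarrow> x \<in> X i \<Longrightarrow> closed_nbhd V E x \<subseteq> X ((i + 4) mod 5) \<union> X i \<union> X ((i + 1) mod 5)"
    and dominating_vertex:
      "i < 5 \<Longrightarrow> \<exists>u\<in>X i. closed_nbhd V E u = X ((i + 4) mod 5) \<union> X i \<union> X ((i + 1) mod 5)"

lemma five_ring_partition_exists:
  assumes "simple_graph V E" and "five_ring V E"
  obtains X where "five_ring_partition V E X"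
proof -
  let ?N = "closed_nbhd V E"
  obtain X :: "nat \<Rightarrow> 'a set" where ne: "\<forall>i<5. X i \<noteq> {}" and cover: "(\<Union>i<5. X i) = V"
    and disj: "\<forall>i<5. \<forall>j<5. i \<noteq> j \<longrightarrow> X i \<inter> X j = {}"
    and lists: "\<forall>i<5. \<exists>us. distinct us \<and> set us = X i \<and> X i \<subseteq> ?N (last us) \<and>
          (\<forall>k. Suc k < length us \<longrightarrow> ?N (us ! Suc k) \<subseteq> ?N (us ! k)) \<and>
          ?N (us ! 0) = X ((i + 4) mod 5) \<union> X i \<union> X ((i + 1) mod 5)"
    using assms(2) unfolding five_ring_def by blast
  have "five_ring_partition V E X"
  proof
    fix i :: nat assume i: "i < 5"
    then obtain us where us: "set us = X i" "X i \<subseteq> ?N (last us)"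
        "\<And>k. Suc k < length us \<Longrightarrow> ?N (us ! Suc k) \<subseteq> ?N (us ! k)"
        "?N (us ! 0) = X ((i + 4) mod 5) \<union> X i \<union> X ((i + 1) mod 5)"
      using lists by blast
    show "X i \<subseteq> ?N x" and "?N x \<subseteq> X ((i + 4) mod 5) \<union> X i \<union> X ((i + 1) mod 5)"
      if "x \<in> X i" for x
      using descending_list_bounds[of us ?N x] us that by auto
    have "us \<noteq> []"
      using ne i us(1) by auto
    then show "\<exists>u\<in>X i. ?N u = X ((i + 4) mod 5) \<union> X i \<union> X ((i + 1) mod 5)"
      using us(1,4) by (metis length_greater_0_conv nth_mem)
  qed (use assms(1) cover disj in auto)
  then show ?thesis
    by (rule that)
qed

context five_ring_partition
begin

lemma adj_sym: "E x y \<Longrightarrow> E y x" and adj_in_V: "E x y \<Longrightarrow> y \<in> V"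
  using simple unfolding simple_graph_def by blast+

lemma part_unique: "i < 5 \<Longrightarrow> j < 5 \<Longrightarrow> x \<in> X i \<Longrightarrow> x \<in> X j \<Longrightarrow> i = j"
  using parts_disjoint by blast

lemma part_subset_V: "i < 5 \<Longrightarrow> X i \<subseteq> V"
  using parts_cover by blast

lemma part_clique: "i < 5 \<Longrightarrow> x \<in> X i \<Longrightarrow> y \<in> X i \<Longrightarrow> x \<noteq> y \<Longrightarrow> E x y"
  using part_subset_nbhd[of i y] by (auto simp: closed_nbhd_def dest: adj_sym)

lemma adj_parts:
  assumes "i < 5" "j < 5" "x \<in> X i" "y \<in> X j" "E x y"
  shows "j = (i + 4) mod 5 \<or> j = i \<or> j = (i + 1) mod 5"
proof -
  have "y \<in> closed_nbhd V E x"
    using assms(5) adj_in_V by (simp add: closed_nbhd_def)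
  then obtain k where "k \<in> {(i + 4) mod 5, i, (i + 1) mod 5}" "y \<in> X k"
    using nbhd_subset_parts[OF assms(1,3)] by blast
  moreover from this have "k < 5"
    using assms(1) by auto
  ultimately show ?thesis
    using part_unique[OF assms(2) _ assms(4)] by blast
qed

lemma dominating_vertex_adj:
  assumes "i < 5"
  shows "\<exists>u\<in>X i. \<forall>y\<in>X ((i + 4) mod 5) \<union> X ((i + 1) mod 5). E u y"
proof -
  obtain u where u: "u \<in> X i" "closed_nbhd V E u = X ((i + 4) mod 5) \<union> X i \<union> X ((i + 1) mod 5)"
    using dominating_vertex[OF assms] by blast
  have "i \<noteq> (i + 4) mod 5" "i \<noteq> (i + 1) mod 5"
    using assms by presburger+
  then have "u \<notin> X ((i + 4) mod 5) \<union> X ((i + 1) mod 5)"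
    using u(1) part_unique[OF assms] by fastforce
  then show ?thesis
    using u by (auto simp: closed_nbhd_def)
qed

lemma rotate: "five_ring_partition V E (\<lambda>j. X ((m + j) mod 5))"
proof
  have "\<forall>i<5. \<exists>j<5. i = (m + j) mod 5"
    by presburger
  then have rot_surj: "(\<lambda>j. (m + j) mod 5) ` {..<5} = {..<5}"
    by (auto simp: image_iff)
  then show "(\<Union>j<5. X ((m + j) mod 5)) = V"
    using parts_cover by (metis image_image)
  from rot_surj have rot_inj: "inj_on (\<lambda>j. (m + j) mod 5) {..<5}"
    by (simp add: inj_on_iff_eq_card)
  fix i :: nat assume "i < 5"
  have m_i: "(m + i) mod 5 < 5"
    by simp
  have shift: "((m + i) mod 5 + 4) mod 5 = (m + (i + 4) mod 5) mod 5"
    "((m + i) mod 5 + 1) mod 5 = (m + (i + 1) mod 5) mod 5"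
    by (simp_all add: mod_simps ac_simps)
  show "x \<in> X ((m + i) mod 5) \<Longrightarrow> X ((m + i) mod 5) \<subseteq> closed_nbhd V E x" for x
    by (rule part_subset_nbhd[OF m_i])
  show "x \<in> X ((m + i) mod 5) \<Longrightarrow> closed_nbhd V E x \<subseteq>
      X ((m + (i + 4) mod 5) mod 5) \<union> X ((m + i) mod 5) \<union> X ((m + (i + 1) mod 5) mod 5)" for x
    using nbhd_subset_parts[OF m_i, of x] unfolding shift .
  show "\<exists>u\<in>X ((m + i) mod 5). closed_nbhd V E u =
      X ((m + (i + 4) mod 5) mod 5) \<union> X ((m + i) mod 5) \<union> X ((m + (i + 1) mod 5) mod 5)"
    using dominating_vertex[OF m_i] unfolding shift .
  fix j :: nat assume "j < 5" "i \<noteq> j"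
  then have "(m + i) mod 5 \<noteq> (m + j) mod 5"
    using \<open>i < 5\<close> rot_inj by (auto dest: inj_onD)
  then show "X ((m + i) mod 5) \<inter> X ((m + j) mod 5) = {}"
    by (simp add: parts_disjoint)
qed (rule simple)

lemma twoP3_from_independent_transversal:
  assumes "a1 \<in> X 1" "a2 \<in> X 2" "a3 \<in> X 3" "a4 \<in> X 4"
    and indep: "\<forall>x\<in>{a1, a2, a3, a4}. \<forall>y\<in>{a1, a2, a3, a4}. \<not> E x y"
  shows "has_induced twoP3_V twoP3_E V E"
proof -
  have idx: "(1 + 4) mod 5 = (0::nat)" "(1 + 1) mod 5 = (2::nat)"
    "(4 + 4) mod 5 = (3::nat)" "(4 + 1) mod 5 = (0::nat)"
    by simp_all
  obtain b1 where b1: "b1 \<in> X 1" "\<forall>y\<in>X 0 \<union> X 2. E b1 y"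
    using dominating_vertex_adj[of 1, unfolded idx] by auto
  obtain b4 where b4: "b4 \<in> X 4" "\<forall>y\<in>X 3 \<union> X 0. E b4 y"
    using dominating_vertex_adj[of 4, unfolded idx] by auto
  have "b1 \<noteq> a1"
    using b1(2) assms(2) indep by auto
  then have "E a1 b1"
    using part_clique[of 1] assms(1) b1(1) by simp
  have "b4 \<noteq> a4"
    using b4(2) assms(3) indep by auto
  then have "E b4 a4"
    using part_clique[of 4] assms(4) b4(1) by simp
  have far: "\<not> E x y" if "x \<in> X i" "y \<in> X j" "(i, j) \<in> {(1, 3), (1, 4), (2, 4)}" for x y i j
    using that adj_parts[of i j x y] by auto
  have "distinct [a1, b1, a2, a3, b4, a4]"
    using assms(1-4) b1(1) b4(1) \<open>b1 \<noteq> a1\<close> \<open>b4 \<noteq> a4\<close> parts_disjoint[of 1 2] parts_disjoint[of 1 3]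
      parts_disjoint[of 1 4] parts_disjoint[of 2 3] parts_disjoint[of 2 4] parts_disjoint[of 3 4]
    by (simp add: disjoint_iff) blast
  moreover have "{a1, b1, a2, a3, b4, a4} \<subseteq> V"
    using assms(1-4) b1(1) b4(1) part_subset_V[of 1] part_subset_V[of 2] part_subset_V[of 3]
      part_subset_V[of 4] by auto
  moreover have "\<forall>a\<in>{a1, b1, a2}. \<forall>b\<in>{a3, b4, a4}. \<not> E a b"
    using indep far assms(1-4) b1(1) b4(1) by auto
  ultimately show ?thesis
    using has_induced_twoP3I[OF simple] \<open>E a1 b1\<close> b1(2) assms(2) indep b4(2) assms(3)
      \<open>E b4 a4\<close> adj_sym by auto
qed

lemma independent_set_misses_one_part:
  assumes "I \<subseteq> V" and "card I = 4" and indep: "\<forall>x\<in>I. \<forall>y\<in>I. \<not> E x y"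
  obtains m where "\<And>j. j \<in> {1, 2, 3, 4} \<Longrightarrow> X ((m + j) mod 5) \<inter> I \<noteq> {}"
proof -
  define part where "part x = (THE i. i < 5 \<and> x \<in> X i)" for x
  have part: "part x < 5 \<and> x \<in> X (part x)" if "x \<in> V" for x
    unfolding part_def
  proof (rule theI')
    show "\<exists>!i. i < 5 \<and> x \<in> X i"
      using that parts_cover part_unique by blast
  qed
  have "inj_on part I"
  proof (rule inj_onI)
    fix x y assume "x \<in> I" "y \<in> I" "part x = part y"
    then have "part x < 5" "x \<in> X (part x)" "y \<in> X (part x)"
      using part assms(1) by (metis subsetD)+
    then show "x = y"
      using part_clique indep \<open>x \<in> I\<close> \<open>y \<in> I\<close> by blast
  qed
  then have "card (part ` I) = 4"
    using assms(2) by (simp add: card_image)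
  moreover have "part ` I \<subseteq> {..<5}"
    using part assms(1) by auto
  ultimately have "card ({..<5} - part ` I) = 1"
    by (simp add: card_Diff_subset finite_subset)
  then obtain m where m: "{..<5} - part ` I = {m}"
    by (rule card_1_singletonE)
  have "m < 5"
    using m by blast
  have "X ((m + j) mod 5) \<inter> I \<noteq> {}" if "j \<in> {1, 2, 3, 4}" for j
  proof -
    have "(m + j) mod 5 \<noteq> m"
      using that \<open>m < 5\<close> by auto presburger+
    moreover have "(m + j) mod 5 \<in> {..<5}"
      by simp
    ultimately have "(m + j) mod 5 \<in> part ` I"
      using m by blast
    then obtain x where "x \<in> I" "part x = (m + j) mod 5"
      by auto
    then show ?thesis
      using part assms(1) by force
  qed
  then show ?thesis
    by (rule that)
qed

lemma has_induced_twoP3_if_fourK1: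
  assumes "has_induced fourK1_V fourK1_E V E"
  shows "has_induced twoP3_V twoP3_E V E"
proof -
  obtain I where I: "I \<subseteq> V" "card I = 4" "\<forall>x\<in>I. \<forall>y\<in>I. \<not> E x y"
    using assms by (rule has_induced_fourK1E)
  obtain m where m: "\<And>j. j \<in> {1, 2, 3, 4} \<Longrightarrow> X ((m + j) mod 5) \<inter> I \<noteq> {}"
    using independent_set_misses_one_part[OF I] by blast
  interpret rotated: five_ring_partition V E "\<lambda>j. X ((m + j) mod 5)"
    by (rule rotate)
  obtain a1 a2 a3 a4 where "a1 \<in> X ((m + 1) mod 5) \<inter> I" "a2 \<in> X ((m + 2) mod 5) \<inter> I"
    "a3 \<in> X ((m + 3) mod 5) \<inter> I" "a4 \<in> X ((m + 4) mod 5) \<inter> I"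
    using m by (meson ex_in_conv insertCI)
  then show ?thesis
    using rotated.twoP3_from_independent_transversal[of a1 a2 a3 a4] I(3) by auto
qed

end

theorem proposition6p5:
  fixes V :: "'a set" and E :: "'a \<Rightarrow> 'a \<Rightarrow> bool"
  assumes "simple_graph V E" and "five_ring V E"
  shows "H_free fourK1_V fourK1_E V E \<longleftrightarrow> H_free twoP3_V twoP3_E V E"
proof -
  obtain X where "five_ring_partition V E X"
    using assms by (rule five_ring_partition_exists)
  then have "has_induced fourK1_V fourK1_E V E \<Longrightarrow> has_induced twoP3_V twoP3_E V E"
    by (rule five_ring_partition.has_induced_twoP3_if_fourK1)
  moreover have "has_induced twoP3_V twoP3_E V E \<Longrightarrow> has_induced fourK1_V fourK1_E V E"
    by (rule has_induced_trans[OF fourK1_induced_in_twoP3])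
  ultimately show ?thesis
    unfolding H_free_def by blast
qed

end
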